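(* Let $f=f_{xxx}$ be a ternary cubic form with complex coefficients. The following are equivalent: (1) $f$ is completely reducible, i.e. $f=a_xb_xc_x$ for some linear forms $a_x,b_x,c_x$; (2) the Hessian $\Delta$ of $f$ is a multiple of $f$, i.e. $\Delta=\lambda f$ for some $\lambda\in\mathbb C$; (3) $\Pi=0$ (identically as a polynomial in $x$ and $u$); (4) $\Gamma=0$ (identically as a polynomial in $x$ and $u$).
   Context: All forms are homogeneous polynomials with complex coefficients in $x=(x_1,x_2,x_3)$, whose coefficients may also depend polynomially on auxiliary indeterminates $u=(u_1,u_2,u_3)$. For $a\in\mathbb C^3$ write $a_x=a_1x_1+a_2x_2+a_3x_3$, and $u_x=u_1x_1+u_2x_2+u_3x_3$. For forms $f,g,h$ and an integer $n\ge1$ the $n$-th transvectant is $J^n[f,g,h]=\big(\Omega^n(f(x)g(y)h(z))\big)\big|_{y=z=x}$, where $y,z$ are further triples of variables and $\Omega$ is the determinant of the $3\times3$ matrix of operators with rows $(\partial/\partial x_i)_i$, $(\partial/\partial y_i)_i$, $(\partial/\partial z_i)_i$. Equivalently, expand $\det(a,b,c)^n$ as a polynomial in the entries of $a,b,c$ and replace each monomial $a^\alpha b^\beta c^\gamma$ by $\partial^\alpha f\,\partial^\beta g\,\partial^\gamma h$, where all derivatives are with respect to $x$ and $u$ is treated as a constant. Write $J=J^1$. For a ternary cubic $f$ define $\Delta=\tfrac1{12}J^2[f,f,f]$; this is the Hessian, equal to $\tfrac12\det(\partial^2f/\partial x_i\partial x_j)$. Define also $\Pi=\tfrac1{12}J[\Delta,f,u_x]$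 (degree 4 in $x$, degree 1 in $u$) and $\Gamma=\tfrac1{432}J^3[\Pi,f,u_x^3]$ (degree 1 in $x$, degree 4 in $u$). *)

theory Defs
  imports "HOL-Analysis.Analysis"
begin

text \<open>A form is represented as the polynomial function (x,u) |-> F x u on complex^3 x complex^3.
Over the infinite field of complex numbers, identity of polynomials coincides with identity
of the associated polynomial functions.\<close>

type_synonym form = "complex^3 \<Rightarrow> complex^3 \<Rightarrow> complex"

definition cubic_form :: "(nat \<Rightarrow> nat \<Rightarrow> nat \<Rightarrow> complex) \<Rightarrow> form" where
  "cubic_form c = (\<lambda>x u. \<Sum>(i,j,k)\<in>{(i,j,k). i + j + k = (3::nat)}.
       c i j k * (x$1)^i * (x$2)^j * (x$3)^k)"

definition lin_form :: "complex^3 \<Rightarrow> form" where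
  "lin_form a = (\<lambda>x u. \<Sum>i\<in>UNIV. a$i * x$i)"

definition ux :: form where
  "ux = (\<lambda>x u. \<Sum>i\<in>UNIV. u$i * x$i)"

definition pdx :: "3 \<Rightarrow> form \<Rightarrow> form" where
  "pdx i F = (\<lambda>x u. deriv (\<lambda>t. F (x + axis i t) u) 0)"

text \<open>n-th transvectant J^n[f,g,h]: Omega^(n+1) = Omega^n o Omega, with
 Omega = sum over permutations p of sign p * d/dx_(p 1) d/dy_(p 2) d/dz_(p 3),
 followed by restriction y = z = x.\<close>
fun transvectant :: "nat \<Rightarrow> form \<Rightarrow> form \<Rightarrow> form \<Rightarrow> form" where
  "transvectant 0 f g h = (\<lambda>x u. f x u * g x u * h x u)"
| "transvectant (Suc n) f g h = (\<lambda>x u. \<Sum>p\<in>{p. p permutes (UNIV::3 set)}.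
      of_int (sign p) * transvectant n (pdx (p 1) f) (pdx (p 2) g) (pdx (p 3) h) x u)"

definition hessian_form :: "form \<Rightarrow> form" where
  "hessian_form f = (\<lambda>x u. transvectant 2 f f f x u / 12)"

definition Pi_form :: "form \<Rightarrow> form" where
  "Pi_form f = (\<lambda>x u. transvectant 1 (hessian_form f) f ux x u / 12)"

definition Gamma_form :: "form \<Rightarrow> form" where
  "Gamma_form f = (\<lambda>x u. transvectant 3 (Pi_form f) f (\<lambda>x u. (ux x u)^3) x u / 432)"

end

theory Submission
  imports Defs "HOL-Computational_Algebra.Fundamental_Theorem_Algebra"
begin

text \<open>
  If \<open>f = a\<^sub>x b\<^sub>x c\<^sub>x\<close>, a direct computation gives \<open>\<Delta> = det(a,b,c)\<^sup>2 f\<close>.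
  If \<open>\<Delta> = \<lambda> f\<close>, then \<open>\<Pi>\<close> is a multiple of \<open>J[f,f,u\<^sub>x]\<close>, which vanishes
  because the transvectant is alternating; and \<open>\<Pi> = 0\<close> trivially gives \<open>\<Gamma> = 0\<close>.

  For the converse, \<open>\<Gamma>\<close> is a covariant: the substitution \<open>x \<mapsto> A x\<close>
  (with \<open>u\<close> transformed contragrediently) multiplies it by \<open>det A\<^sup>6\<close>, so for
  invertible \<open>A\<close> it suffices to treat the transformed form. A root of a cubic equation
  gives a point of the curve \<open>f = 0\<close>, which we move to \<open>e\<^sub>3 = (0,0,1)\<close>.
  Substitutions fixing \<open>e\<^sub>3\<close> then bring \<open>f\<close> into a normal form according to
  whether \<open>e\<^sub>3\<close> is a smooth point, a node, a cusp or a triple point (where \<open>f\<close>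
  is a binary cubic and splits by the fundamental theorem of algebra). In the first three
  cases, evaluating \<open>\<Gamma>\<close> at a few points forces the remaining coefficients into a
  completely reducible shape.
\<close>

inductive poly_form :: "form \<Rightarrow> bool" where
  const_u: "poly_form (\<lambda>x u. k u)"
| coord: "poly_form (\<lambda>x u. x $ i)"
| add: "poly_form F \<Longrightarrow> poly_form G \<Longrightarrow> poly_form (\<lambda>x u. F x u + G x u)"
| mult: "poly_form F \<Longrightarrow> poly_form G \<Longrightarrow> poly_form (\<lambda>x u. F x u * G x u)"

declare poly_form.intros [simp, intro]

lemma axis_nth_if: "axis j t $ i = (if i = j then t else 0)"
  by (simp add: axis_def)

lemma scaleR_axis_one: "t *s axis j (1::complex) = axis j t"
  by (simp add: vec_eq_iff axis_nth_if)

lemma axis_zero [simp]: "axis i (0::complex) = 0"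
  by (simp add: vec_eq_iff axis_nth_if)

lemma sum_axis_one_mult: "(\<Sum>j\<in>UNIV. axis i (1::complex) $ j * D j) = (D i :: complex)"
  by (simp add: axis_nth_if if_distrib[of "\<lambda>c. c * _"] cong: if_cong)

lemma pdx_eqI:
  "(\<And>x u. ((\<lambda>t. F (x + axis i t) u) has_field_derivative D x u) (at 0)) \<Longrightarrow> pdx i F = D"
  unfolding pdx_def fun_eq_iff by (blast intro: DERIV_imp_deriv)

lemma pdx_const [simp]: "pdx i (\<lambda>x u. k u) = (\<lambda>x u. 0)"
  by (simp add: pdx_def fun_eq_iff)

lemma pdx_coord [simp]: "pdx i (\<lambda>x u. x $ j) = (\<lambda>x u. if j = i then 1 else 0)"
  by (rule pdx_eqI) (auto simp: axis_nth_if intro!: derivative_eq_intros)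

lemma poly_form_line_derivative:
  assumes "poly_form F"
  shows "((\<lambda>t. F (x + t *s v) u) has_field_derivative
            (\<Sum>j\<in>UNIV. v $ j * pdx j F (x + t0 *s v) u)) (at t0)"
  using assms
proof (induction arbitrary: x v u t0)
  case (const_u k)
  then show ?case by (simp add: pdx_def)
next
  case (coord i)
  have "(\<Sum>j\<in>UNIV. v $ j * (if i = j then 1 else 0)) = v $ i"
    by (simp add: if_distrib[of "\<lambda>c. _ * c"] cong: if_cong)
  then show ?case
    by (auto intro!: derivative_eq_intros)
next
  case (add F G)
  have "pdx j (\<lambda>x u. F x u + G x u) y u = pdx j F y u + pdx j G y u" for j y u
    using DERIV_add[OF add.IH(1)[of y "axis j 1" u 0] add.IH(2)[of y "axis j 1" u 0]]
    by (simp add: pdx_def scaleR_axis_one sum_axis_one_mult DERIV_imp_deriv)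
  then show ?case
    using DERIV_add[OF add.IH(1)[of x v u t0] add.IH(2)[of x v u t0]]
    by (simp add: distrib_left sum.distrib)
next
  case (mult F G)
  have "pdx j (\<lambda>x u. F x u * G x u) y u = pdx j F y u * G y u + F y u * pdx j G y u" for j y u
    using DERIV_mult'[OF mult.IH(1)[of y "axis j 1" u 0] mult.IH(2)[of y "axis j 1" u 0]]
    by (simp add: pdx_def scaleR_axis_one sum_axis_one_mult DERIV_imp_deriv add.commute mult.commute)
  moreover have "F y u * (\<Sum>j\<in>UNIV. v $ j * pdx j G y u) + (\<Sum>j\<in>UNIV. v $ j * pdx j F y u) * G y u
     = (\<Sum>j\<in>UNIV. v $ j * (pdx j F y u * G y u + F y u * pdx j G y u))" for y
    by (simp add: sum_distrib_left sum_distrib_right sum.distrib[symmetric] distrib_left mult_ac add.commute)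
  ultimately show ?case
    using DERIV_mult'[OF mult.IH(1)[of x v u t0] mult.IH(2)[of x v u t0]] by simp
qed

lemma pdx_has_field_derivative:
  "poly_form F \<Longrightarrow> ((\<lambda>t. F (x + axis i t) u) has_field_derivative pdx i F x u) (at 0)"
  using poly_form_line_derivative[of F x "axis i 1" u 0]
  by (simp add: scaleR_axis_one sum_axis_one_mult)

lemma pdx_add [simp]:
  "poly_form F \<Longrightarrow> poly_form G \<Longrightarrow>
    pdx i (\<lambda>x u. F x u + G x u) = (\<lambda>x u. pdx i F x u + pdx i G x u)"
  by (intro pdx_eqI DERIV_add pdx_has_field_derivative)

lemma pdx_mult [simp]:
  "poly_form F \<Longrightarrow> poly_form G \<Longrightarrow>
    pdx i (\<lambda>x u. F x u * G x u) = (\<lambda>x u. pdx i F x u * G x u + F x u * pdx i G x u)"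
proof (rule pdx_eqI)
  fix x u
  assume "poly_form F" "poly_form G"
  from DERIV_mult'[OF pdx_has_field_derivative[OF this(1)] pdx_has_field_derivative[OF this(2)]]
  show "((\<lambda>t. F (x + axis i t) u * G (x + axis i t) u) has_field_derivative
      pdx i F x u * G x u + F x u * pdx i G x u) (at 0)"
    by (simp add: add.commute)
qed

lemma poly_form_pdx [simp, intro]: "poly_form F \<Longrightarrow> poly_form (pdx i F)"
  by (induction rule: poly_form.induct) simp_all

lemma poly_form_scalar [simp, intro]: "poly_form (\<lambda>x u. c)"
  using poly_form.const_u[of "\<lambda>_. c"] by simp

lemma poly_form_diff [simp, intro]:
  "poly_form F \<Longrightarrow> poly_form G \<Longrightarrow> poly_form (\<lambda>x u. F x u - G x u)"
proof -
  assume "poly_form F" "poly_form G"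
  then have "poly_form (\<lambda>x u. F x u + (\<lambda>_. -1) u * G x u)"
    by (intro poly_form.add poly_form.mult poly_form.const_u)
  then show ?thesis by simp
qed

lemma poly_form_uminus [simp, intro]:
  "poly_form F \<Longrightarrow> poly_form (\<lambda>x u. - F x u)"
proof -
  assume "poly_form F"
  then have "poly_form (\<lambda>x u. (\<lambda>_. -1) u * F x u)"
    by (intro poly_form.mult poly_form.const_u)
  then show ?thesis by simp
qed

lemma poly_form_power [simp, intro]:
  "poly_form F \<Longrightarrow> poly_form (\<lambda>x u. F x u ^ n)"
  by (induction n) auto

lemma poly_form_sum [simp, intro]:
  "(\<And>j. j \<in> S \<Longrightarrow> poly_form (F j)) \<Longrightarrow> poly_form (\<lambda>x u. \<Sum>j\<in>S. F j x u)"
  by (induction S rule: infinite_finite_induct) auto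

lemma poly_form_divide [simp, intro]:
  "poly_form F \<Longrightarrow> poly_form (\<lambda>x u. F x u / c)"
proof -
  assume "poly_form F"
  then have "poly_form (\<lambda>x u. F x u * (\<lambda>_. 1 / c) u)"
    by (intro poly_form.mult poly_form.const_u)
  then show ?thesis by simp
qed

lemma pdx_diff [simp]:
  "poly_form F \<Longrightarrow> poly_form G \<Longrightarrow>
    pdx i (\<lambda>x u. F x u - G x u) = (\<lambda>x u. pdx i F x u - pdx i G x u)"
  by (intro pdx_eqI DERIV_diff pdx_has_field_derivative)

lemma pdx_uminus [simp]:
  "poly_form F \<Longrightarrow> pdx i (\<lambda>x u. - F x u) = (\<lambda>x u. - pdx i F x u)"
  by (intro pdx_eqI DERIV_minus pdx_has_field_derivative)

lemma pdx_power [simp]: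
  "poly_form F \<Longrightarrow>
    pdx i (\<lambda>x u. F x u ^ n) = (\<lambda>x u. of_nat n * (pdx i F x u * F x u ^ (n - Suc 0)))"
proof (rule pdx_eqI)
  fix x u
  assume "poly_form F"
  from DERIV_power[OF pdx_has_field_derivative[OF this], of x i u n]
  show "((\<lambda>t. F (x + axis i t) u ^ n) has_field_derivative
      of_nat n * (pdx i F x u * F x u ^ (n - Suc 0))) (at 0)"
    by simp
qed

lemma pdx_sum [simp]:
  "finite S \<Longrightarrow> (\<And>j. j \<in> S \<Longrightarrow> poly_form (F j)) \<Longrightarrow>
    pdx i (\<lambda>x u. \<Sum>j\<in>S. F j x u) = (\<lambda>x u. \<Sum>j\<in>S. pdx i (F j) x u)"
  by (induction S rule: finite_induct) simp_all

lemma pdx_commute: "poly_form F \<Longrightarrow> pdx i (pdx j F) = pdx j (pdx i F)"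
  by (induction rule: poly_form.induct) (simp_all add: algebra_simps)

lemma pdx_cong: "(\<And>y. F y u = G y u) \<Longrightarrow> pdx i F x u = pdx i G x u"
  by (simp add: pdx_def)

lemma pdx_scale [simp]:
  "poly_form F \<Longrightarrow> pdx i (\<lambda>x u. c * F x u) = (\<lambda>x u. c * pdx i F x u)"
  using pdx_mult[OF poly_form_scalar[of c], of F i] by simp

lemma sum_permutations_3:
  "(\<Sum>p\<in>{p. p permutes (UNIV::3 set)}. of_int (sign p) * G (p 1) (p 2) (p 3)) =
   (G 1 2 3 - G 1 3 2 - G 2 1 3 + G 2 3 1 + G 3 1 2 - G 3 2 1 :: 'a::comm_ring_1)"
proof -
  have f123: "finite {2::3, 3}" "1 \<notin> {2::3, 3}" and f23: "finite {3::3}" "2 \<notin> {3::3}"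
    by auto
  show ?thesis
    unfolding UNIV_3 sum_over_permutations_insert[OF f123] sum_over_permutations_insert[OF f23]
      permutes_sing
    by (simp add: sign_swap_id permutation_swap_id sign_compose sign_id swap_id_eq algebra_simps)
qed

lemma transvectant_Suc_expand:
  "transvectant (Suc n) f g h x u =
     transvectant n (pdx 1 f) (pdx 2 g) (pdx 3 h) x u - transvectant n (pdx 1 f) (pdx 3 g) (pdx 2 h) x u
   - transvectant n (pdx 2 f) (pdx 1 g) (pdx 3 h) x u + transvectant n (pdx 2 f) (pdx 3 g) (pdx 1 h) x u
   + transvectant n (pdx 3 f) (pdx 1 g) (pdx 2 h) x u - transvectant n (pdx 3 f) (pdx 2 g) (pdx 1 h) x u"
  using sum_permutations_3[where G = "\<lambda>a b c. transvectant n (pdx a f) (pdx b g) (pdx c h) x u"]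
  by simp

lemma transvectant_2_eq: "transvectant 2 = transvectant (Suc (Suc 0))"
  by (simp add: numeral_2_eq_2)

lemma poly_form_transvectant [simp, intro]:
  "poly_form f \<Longrightarrow> poly_form g \<Longrightarrow> poly_form h \<Longrightarrow> poly_form (transvectant n f g h)"
  by (induction n arbitrary: f g h) simp_all

lemma transvectant_zero_left: "transvectant n (\<lambda>x u. 0) g h = (\<lambda>x u. 0)"
proof (induction n arbitrary: g h)
  case (Suc n)
  have "pdx i (\<lambda>x u. 0) = (\<lambda>x u. 0)" for i
    using pdx_const[of i "\<lambda>_. 0"] by simp
  with Suc show ?case by simp
qed simp

lemma transvectant_trilinear:
  assumes "finite I" "finite J" "finite K"
    and "\<And>i. i \<in> I \<Longrightarrow> poly_form (F i)" "\<And>j. j \<in> J \<Longrightarrow> poly_form (G j)"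
    and "\<And>k. k \<in> K \<Longrightarrow> poly_form (H k)"
  shows "transvectant n (\<lambda>x u. \<Sum>i\<in>I. a i * F i x u) (\<lambda>x u. \<Sum>j\<in>J. b j * G j x u)
      (\<lambda>x u. \<Sum>k\<in>K. c k * H k x u) x u
    = (\<Sum>i\<in>I. \<Sum>j\<in>J. \<Sum>k\<in>K. a i * b j * c k * transvectant n (F i) (G j) (H k) x u)"
  using assms(4-6)
proof (induction n arbitrary: F G H x u)
  case 0
  have "(\<Sum>i\<in>I. a i * F i x u) * (\<Sum>j\<in>J. b j * G j x u) * (\<Sum>k\<in>K. c k * H k x u)
    = (\<Sum>i\<in>I. \<Sum>j\<in>J. \<Sum>k\<in>K. a i * F i x u * (b j * G j x u) * (c k * H k x u))"
    by (simp only: sum_distrib_left[symmetric] sum_distrib_right[symmetric])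
  then show ?case
    by (simp add: mult_ac)
next
  case (Suc n)
  have "pdx l (\<lambda>x u. \<Sum>i\<in>I. a i * F i x u) = (\<lambda>x u. \<Sum>i\<in>I. a i * pdx l (F i) x u)"
    "pdx l (\<lambda>x u. \<Sum>j\<in>J. b j * G j x u) = (\<lambda>x u. \<Sum>j\<in>J. b j * pdx l (G j) x u)"
    "pdx l (\<lambda>x u. \<Sum>k\<in>K. c k * H k x u) = (\<lambda>x u. \<Sum>k\<in>K. c k * pdx l (H k) x u)" for l
    using Suc.prems assms(1-3) by simp_all
  then show ?case
    using Suc.prems
    by (simp add: Suc.IH sum_distrib_left sum.swap[of _ "{p. p permutes UNIV}"] mult_ac)
qed

lemma transvectant_scale_left:
  assumes "poly_form f" "poly_form g" "poly_form h"
  shows "transvectant n (\<lambda>x u. c * f x u) g h x u = c * transvectant n f g h x u"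
  using transvectant_trilinear[of "{()}" "{()}" "{()}" "\<lambda>_. f" "\<lambda>_. g" "\<lambda>_. h" n "\<lambda>_. c"
      "\<lambda>_. 1" "\<lambda>_. 1"] assms
  by simp

lemma poly_form_linear_subst [simp, intro]:
  "poly_form F \<Longrightarrow> poly_form (\<lambda>x u. F (A *v x) (\<phi> u))"
proof (induction rule: poly_form.induct)
  case (const_u k)
  show ?case using poly_form.const_u[of "\<lambda>u. k (\<phi> u)"] .
next
  case (coord i)
  have "poly_form (\<lambda>x u. \<Sum>j\<in>UNIV. A$i$j * x$j)" by auto
  then show ?case by (simp add: matrix_vector_mult_def)
qed auto

lemma pdx_linear_subst:
  assumes "poly_form F"
  shows "pdx i (\<lambda>x u. F (A *v x) (\<phi> u)) = (\<lambda>x u. \<Sum>j\<in>UNIV. A$j$i * pdx j F (A *v x) (\<phi> u))"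
proof (rule pdx_eqI)
  fix x u
  let ?c = "\<chi> j. A$j$i"
  have e: "A *v (x + axis i t) = A *v x + t *s ?c" for t
    using exhaust_3[of i]
    by (auto simp add: vec_eq_iff forall_3 matrix_vector_mult_def sum_3 axis_nth_if algebra_simps)
  show "((\<lambda>t. F (A *v (x + axis i t)) (\<phi> u)) has_field_derivative
     (\<Sum>j\<in>UNIV. A$j$i * pdx j F (A *v x) (\<phi> u))) (at 0)"
    using poly_form_line_derivative[OF assms, of "A *v x" ?c "\<phi> u" 0]
    unfolding e by simp
qed

lemma sum_permutations_3_det:
  fixes A :: "'a::comm_ring_1^3^3"
  shows "(\<Sum>p\<in>{p. p permutes (UNIV::3 set)}. of_int (sign p) *
     (\<Sum>j\<in>UNIV. \<Sum>k\<in>UNIV. \<Sum>l\<in>UNIV. A$j$(p 1) * A$k$(p 2) * A$l$(p 3) * X j k l)) =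
   det A * (\<Sum>p\<in>{p. p permutes (UNIV::3 set)}. of_int (sign p) * X (p 1) (p 2) (p 3))"
proof -
  let ?G = "\<lambda>a b c. \<Sum>j\<in>UNIV. \<Sum>k\<in>UNIV. \<Sum>l\<in>UNIV. A$j$a * A$k$b * A$l$c * X j k l"
  have "(\<Sum>p\<in>{p. p permutes (UNIV::3 set)}. of_int (sign p) * ?G (p 1) (p 2) (p 3)) =
      ?G 1 2 3 - ?G 1 3 2 - ?G 2 1 3 + ?G 2 3 1 + ?G 3 1 2 - ?G 3 2 1"
    by (rule sum_permutations_3)
  then show ?thesis
    unfolding sum_permutations_3[of X] det_3 sum_3 by (simp add: algebra_simps)
qed

lemma transvectant_linear_subst:
  assumes "poly_form F" "poly_form G" "poly_form H"
  shows "transvectant n (\<lambda>x u. F (A *v x) (\<phi> u)) (\<lambda>x u. G (A *v x) (\<phi> u))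
      (\<lambda>x u. H (A *v x) (\<phi> u)) x u
     = det A ^ n * transvectant n F G H (A *v x) (\<phi> u)"
  using assms
proof (induction n arbitrary: F G H x u)
  case (Suc n)
  let ?X = "\<lambda>j k l. det A ^ n * transvectant n (pdx j F) (pdx k G) (pdx l H) (A *v x) (\<phi> u)"
  have "transvectant n (pdx a (\<lambda>x u. F (A *v x) (\<phi> u))) (pdx b (\<lambda>x u. G (A *v x) (\<phi> u)))
        (pdx c (\<lambda>x u. H (A *v x) (\<phi> u))) x u =
      (\<Sum>j\<in>UNIV. \<Sum>k\<in>UNIV. \<Sum>l\<in>UNIV. A$j$a * A$k$b * A$l$c * ?X j k l)" for a b c
    using Suc by (simp add: pdx_linear_subst transvectant_trilinear)
  then have "transvectant (Suc n) (\<lambda>x u. F (A *v x) (\<phi> u)) (\<lambda>x u. G (A *v x) (\<phi> u))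
      (\<lambda>x u. H (A *v x) (\<phi> u)) x u
    = det A * (\<Sum>p\<in>{p. p permutes (UNIV::3 set)}. of_int (sign p) * ?X (p 1) (p 2) (p 3))"
    by (simp only: transvectant.simps sum_permutations_3_det)
  then show ?case
    by (simp add: sum_distrib_left mult_ac)
qed simp

lemma ux_expand: "ux x u = u$1 * x$1 + u$2 * x$2 + u$3 * x$3"
  by (simp add: ux_def sum_3)

lemma poly_form_ux [simp, intro]: "poly_form ux"
  unfolding ux_def by auto

lemma pdx_ux [simp]: "pdx i ux = (\<lambda>x u. u $ i)"
  unfolding ux_def by (simp add: if_distrib[of "\<lambda>c. _ * c"] cong: if_cong)

lemma poly_form_hessian_form [simp, intro]:
  "poly_form F \<Longrightarrow> poly_form (hessian_form F)"
  unfolding hessian_form_def by simp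

lemma poly_form_Pi_form [simp, intro]: "poly_form F \<Longrightarrow> poly_form (Pi_form F)"
  unfolding Pi_form_def by simp

lemma pdx3_ux_cube: "pdx a (pdx b (pdx c (\<lambda>x u. ux x u ^ 3))) x u = 6 * u$a * u$b * u$c"
proof -
  have "pdx c (\<lambda>x u. ux x u ^ 3) = (\<lambda>x u. 3 * (u$c * ux x u ^ 2))"
    using pdx_power[OF poly_form_ux, of c 3] by simp
  then have "pdx b (pdx c (\<lambda>x u. ux x u ^ 3)) = (\<lambda>x u. 6 * u$c * u$b * ux x u)"
    by (simp add: fun_eq_iff power2_eq_square algebra_simps)
  then show ?thesis by (simp add: mult_ac)
qed

lemma pdx3_Pi_form_cong:
  "(\<And>y. Pi_form F y u = P y) \<Longrightarrow>
    pdx a (pdx b (pdx c (Pi_form F))) x u = pdx a (pdx b (pdx c (\<lambda>y v. P y))) x u"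
  by (intro pdx_cong) simp

lemma Pi_form_expand:
  "poly_form F \<Longrightarrow> Pi_form F x u = (
     pdx 1 (hessian_form F) x u * pdx 2 F x u * u$3 - pdx 1 (hessian_form F) x u * pdx 3 F x u * u$2
   - pdx 2 (hessian_form F) x u * pdx 1 F x u * u$3 + pdx 2 (hessian_form F) x u * pdx 3 F x u * u$1
   + pdx 3 (hessian_form F) x u * pdx 1 F x u * u$2 - pdx 3 (hessian_form F) x u * pdx 2 F x u * u$1) / 12"
  unfolding Pi_form_def One_nat_def transvectant_Suc_expand by simp

text \<open>At \<open>u = e\<^sub>k\<close> only the third derivative \<open>\<partial>\<^sub>k\<^sup>3\<close> of \<open>u\<^sub>x\<^sup>3\<close> survives, which leaves four
  products of third derivatives in the two other directions.\<close>

lemma Gamma_form_at_axis: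
  assumes F: "poly_form F" and cyclic: "(k, i, j) \<in> {(1, 2, 3), (2, 3, 1), (3, 1, 2)}"
  defines "P \<equiv> Pi_form F"
  shows "Gamma_form F x (axis k 1) =
    (pdx i (pdx i (pdx i P)) x (axis k 1) * pdx j (pdx j (pdx j F)) x (axis k 1)
     - 3 * pdx i (pdx i (pdx j P)) x (axis k 1) * pdx i (pdx j (pdx j F)) x (axis k 1)
     + 3 * pdx i (pdx j (pdx j P)) x (axis k 1) * pdx i (pdx i (pdx j F)) x (axis k 1)
     - pdx j (pdx j (pdx j P)) x (axis k 1) * pdx i (pdx i (pdx i F)) x (axis k 1)) / 72"
proof -
  have P: "poly_form P" unfolding P_def using F by simp
  note comm = pdx_commute[OF P] pdx_commute[OF poly_form_pdx[OF P]]
    pdx_commute[OF F] pdx_commute[OF poly_form_pdx[OF F]]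
  have T3: "transvectant 3 f g h x u = transvectant (Suc (Suc (Suc 0))) f g h x u" for f g h x u
    by (simp add: numeral_3_eq_3)
  from cyclic consider "k = 1" "i = 2" "j = 3" | "k = 2" "i = 3" "j = 1" | "k = 3" "i = 1" "j = 2"
    by blast
  then show ?thesis
    unfolding Gamma_form_def P_def[symmetric] T3
    by cases (simp only: transvectant_Suc_expand transvectant.simps(1) pdx3_ux_cube,
        simp add: axis_nth_if, simp add: comm)+
qed

lemmas Gamma_form_at_axis_1 =
  Gamma_form_at_axis[where k=1 and i=2 and j=3, simplified insert_iff simp_thms True_implies_equals]
lemmas Gamma_form_at_axis_2 =
  Gamma_form_at_axis[where k=2 and i=3 and j=1, simplified insert_iff simp_thms True_implies_equals]
lemmas Gamma_form_at_axis_3 =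
  Gamma_form_at_axis[where k=3 and i=1 and j=2, simplified insert_iff simp_thms True_implies_equals]

lemma ux_linear_subst:
  assumes "B ** A = (mat 1 :: complex^3^3)"
  shows "ux (A *v x) (transpose B *v u) = ux x u"
proof -
  have "ux x u = ux ((B ** A) *v x) u" using assms by simp
  also have "\<dots> = ux (A *v x) (transpose B *v u)"
    unfolding ux_expand matrix_vector_mul_assoc[symmetric]
    by (simp add: matrix_vector_mult_def transpose_def sum_3 algebra_simps)
  finally show ?thesis by simp
qed

lemma Gamma_form_linear_subst:
  assumes F: "poly_form F" and BA: "B ** A = (mat 1 :: complex^3^3)"
  shows "Gamma_form (\<lambda>x u. F (A *v x) (transpose B *v u)) x u
       = det A ^ 6 * Gamma_form F (A *v x) (transpose B *v u)"
proof -
  let ?\<phi> = "\<lambda>u. transpose B *v u"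
  have ux: "ux = (\<lambda>x u. ux (A *v x) (?\<phi> u))"
    using ux_linear_subst[OF BA] by (simp add: fun_eq_iff)
  have hessian: "hessian_form (\<lambda>x u. F (A *v x) (?\<phi> u))
      = (\<lambda>x u. det A ^ 2 * hessian_form F (A *v x) (?\<phi> u))"
    unfolding hessian_form_def fun_eq_iff using transvectant_linear_subst[OF F F F, of 2 A ?\<phi>]
    by simp
  have Pi: "Pi_form (\<lambda>x u. F (A *v x) (?\<phi> u)) = (\<lambda>x u. det A ^ 3 * Pi_form F (A *v x) (?\<phi> u))"
  proof -
    have "Pi_form (\<lambda>x u. F (A *v x) (?\<phi> u)) x u =
        det A ^ 2 * transvectant 1 (\<lambda>x u. hessian_form F (A *v x) (?\<phi> u))
          (\<lambda>x u. F (A *v x) (?\<phi> u)) (\<lambda>x u. ux (A *v x) (?\<phi> u)) x u / 12" for x u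
      unfolding Pi_form_def hessian by (subst ux, subst transvectant_scale_left) (auto simp: F)
    also have "\<dots> x u = det A ^ 3 * Pi_form F (A *v x) (?\<phi> u)" for x u
      unfolding Pi_form_def
      by (subst transvectant_linear_subst) (auto simp: F power3_eq_cube power2_eq_square)
    finally show ?thesis by (simp add: fun_eq_iff)
  qed
  have "Gamma_form (\<lambda>x u. F (A *v x) (?\<phi> u)) x u =
      det A ^ 3 * transvectant 3 (\<lambda>x u. Pi_form F (A *v x) (?\<phi> u)) (\<lambda>x u. F (A *v x) (?\<phi> u))
        (\<lambda>x u. (\<lambda>x u. ux x u ^ 3) (A *v x) (?\<phi> u)) x u / 432"
    unfolding Gamma_form_def Pi by (subst ux, subst transvectant_scale_left) (auto simp: F)
  also have "\<dots> = det A ^ 6 * Gamma_form F (A *v x) (?\<phi> u)"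
    unfolding Gamma_form_def by (subst transvectant_linear_subst) (auto simp: F)
  finally show ?thesis .
qed

definition completely_reducible :: "form \<Rightarrow> bool" where
  "completely_reducible F \<longleftrightarrow>
     (\<exists>a b d. \<forall>x u. F x u = lin_form a x u * lin_form b x u * lin_form d x u)"

lemma lin_form_expand: "lin_form a x u = a$1 * x$1 + a$2 * x$2 + a$3 * x$3"
  by (simp add: lin_form_def sum_3)

text \<open>Normal forms of a cubic through \<open>e\<^sub>3\<close> when \<open>e\<^sub>3\<close> is a smooth point
  with tangent \<open>x\<^sub>1 = 0\<close>, a node with tangents \<open>x\<^sub>1 x\<^sub>2 = 0\<close>, or a cusp
  with tangent \<open>x\<^sub>1\<^sup>2 = 0\<close>.\<close>

definition nf_smooth :: "complex \<Rightarrow> complex \<Rightarrow> complex \<Rightarrow> complex \<Rightarrow> complex \<Rightarrow> form" where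
  "nf_smooth q c0 c1 c2 c3 = (\<lambda>x u. (x$1)^3 * c0 + (x$1)^2 * (x$2) * c1 + (x$1) * (x$2)^2 * c2
      + (x$1) * (x$3)^2 + (x$2)^3 * c3 + (x$2)^2 * (x$3) * q)"

lemma poly_form_nf_smooth: "poly_form (nf_smooth q c0 c1 c2 c3)" unfolding nf_smooth_def by auto

lemma nf_smooth_hessian:
  "hessian_form (nf_smooth q c0 c1 c2 c3) = (\<lambda>x u. 12 * (x$1)^3 * c0 * c2 - 4 * (x$1)^3 * c1^2
      + 36 * (x$1)^2 * (x$2) * c0 * c3 - 4 * (x$1)^2 * (x$2) * c1 * c2 + 12 * (x$1)^2 * (x$3) * q * c0
      - 12 * (x$1) * (x$2)^2 * q^2 * c0 + 12 * (x$1) * (x$2)^2 * c1 * c3 - 4 * (x$1) * (x$2)^2 * c2^2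
      + 12 * (x$1) * (x$2) * (x$3) * q * c1 - 4 * (x$1) * (x$3)^2 * c2 - 4 * (x$2)^3 * q^2 * c1 + 8 * (x$2)^2 * (x$3) * q * c2
      - 12 * (x$2) * (x$3)^2 * c3 - 4 * (x$3)^3 * q)"
  unfolding hessian_form_def fun_eq_iff transvectant_2_eq transvectant_Suc_expand
  by (intro allI) (simp add: nf_smooth_def; (simp add: field_simps)?; algebra?)

lemma nf_smooth_Pi_axis1:
  "Pi_form (nf_smooth q c0 c1 c2 c3) x (axis 1 1) = - ((x$1)^4 * q * c0 * c1) - 2 * (x$1)^3 * (x$2) * q * c0 * c2
      - (x$1)^3 * (x$2) * q * c1^2 + 6 * (x$1)^3 * (x$3) * c0 * c3 - 3 * (x$1)^2 * (x$2)^2 * q * c1 * c2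
      - 6 * (x$1)^2 * (x$2) * (x$3) * q^2 * c0 + 6 * (x$1)^2 * (x$2) * (x$3) * c1 * c3 + 3 * (x$1)^2 * (x$3)^2 * q * c1
      - 2 * (x$1) * (x$2)^3 * q^3 * c0 - (x$1) * (x$2)^3 * q * c1 * c3 - 2 * (x$1) * (x$2)^3 * q * c2^2
      - 3 * (x$1) * (x$2)^2 * (x$3) * q^2 * c1 + 6 * (x$1) * (x$2)^2 * (x$3) * c2 * c3 + 6 * (x$1) * (x$2) * (x$3)^2 * q * c2
      - 2 * (x$1) * (x$3)^3 * c3 - (x$2)^4 * q^3 * c1 - 2 * (x$2)^4 * q * c2 * c3 + 6 * (x$2)^3 * (x$3) * c3^2
      + 6 * (x$2)^2 * (x$3)^2 * q * c3 + 2 * (x$2) * (x$3)^3 * q^2"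
  unfolding Pi_form_expand[OF poly_form_nf_smooth] nf_smooth_hessian
  by (simp add: nf_smooth_def axis_nth_if; (simp add: field_simps)?; algebra?)

lemma nf_smooth_Gamma_axis1:
  "Gamma_form (nf_smooth q c0 c1 c2 c3) x (axis 1 1) = (x$1) * q^2 * c2 + (x$1) * c3^2 + (x$2) * q^2 * c3
      + (x$3) * q^3"
  unfolding Gamma_form_at_axis_1[OF poly_form_nf_smooth]
    pdx3_Pi_form_cong[OF nf_smooth_Pi_axis1]
  by (simp add: nf_smooth_def; (simp add: field_simps)?; algebra?)

lemma nf_smooth_Pi_axis2:
  "Pi_form (nf_smooth q c0 c1 c2 c3) x (axis 2 1) = 3 * (x$1)^4 * q * c0^2 + 5 * (x$1)^3 * (x$2) * q * c0 * c1
      - 8 * (x$1)^3 * (x$3) * c0 * c2 + 2 * (x$1)^3 * (x$3) * c1^2 + 3 * (x$1)^2 * (x$2)^2 * q * c1^2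
      - 18 * (x$1)^2 * (x$2) * (x$3) * c0 * c3 - 6 * (x$1)^2 * (x$3)^2 * q * c0 - 6 * (x$1) * (x$2)^3 * q * c0 * c3
      + 3 * (x$1) * (x$2)^3 * q * c1 * c2 - 6 * (x$1) * (x$2)^2 * (x$3) * c1 * c3 - 3 * (x$1) * (x$2) * (x$3)^2 * q * c1
      + (x$2)^4 * q^3 * c0 - (x$2)^4 * q * c1 * c3 + (x$2)^4 * q * c2^2 - (x$2)^3 * (x$3) * q^2 * c1
      - 2 * (x$2)^3 * (x$3) * c2 * c3 - 2 * (x$2) * (x$3)^3 * c3 - (x$3)^4 * q"
  unfolding Pi_form_expand[OF poly_form_nf_smooth] nf_smooth_hessian
  by (simp add: nf_smooth_def axis_nth_if; (simp add: field_simps)?; algebra?)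

lemma nf_smooth_Gamma_axis2:
  "Gamma_form (nf_smooth q c0 c1 c2 c3) x (axis 2 1) = - (4 * (x$1) * c0 * c2) + (x$1) * c1^2 - 4 * (x$2) * c0 * c3
      - 4 * (x$3) * q * c0"
  unfolding Gamma_form_at_axis_2[OF poly_form_nf_smooth]
    pdx3_Pi_form_cong[OF nf_smooth_Pi_axis2]
  by (simp add: nf_smooth_def; (simp add: field_simps)?; algebra?)
definition nf_node :: "complex \<Rightarrow> complex \<Rightarrow> form" where
  "nf_node a b = (\<lambda>x u. (x$1)^3 * a + (x$1)^2 * (x$2) + (x$1) * (x$2)^2 + (x$1) * (x$2) * (x$3)
      + (x$2)^3 * b)"

lemma poly_form_nf_node: "poly_form (nf_node a b)" unfolding nf_node_def by auto

lemma nf_node_hessian: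
  "hessian_form (nf_node a b) = (\<lambda>x u. - (3 * (x$1)^3 * a) + (x$1)^2 * (x$2) + (x$1) * (x$2)^2
      + (x$1) * (x$2) * (x$3) - 3 * (x$2)^3 * b)"
  unfolding hessian_form_def fun_eq_iff transvectant_2_eq transvectant_Suc_expand
  by (intro allI) (simp add: nf_node_def; (simp add: field_simps)?; algebra?)

lemma nf_node_Pi_axis3:
  "Pi_form (nf_node a b) x (axis 3 1) = - ((x$1)^4 * a) - 2 * (x$1)^3 * (x$2) * a - (x$1)^3 * (x$3) * a
      + 2 * (x$1) * (x$2)^3 * b + (x$2)^4 * b + (x$2)^3 * (x$3) * b"
  unfolding Pi_form_expand[OF poly_form_nf_node] nf_node_hessian
  by (simp add: nf_node_def axis_nth_if; (simp add: field_simps)?; algebra?)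

lemma nf_node_Gamma_axis3:
  "Gamma_form (nf_node a b) x (axis 3 1) = - (3 * (x$1) * a * b) + (x$1) * a - 3 * (x$2) * a * b + (x$2) * b
      - (x$3) * a * b"
  unfolding Gamma_form_at_axis_3[OF poly_form_nf_node]
    pdx3_Pi_form_cong[OF nf_node_Pi_axis3]
  by (simp add: nf_node_def; (simp add: field_simps)?; algebra?)
definition nf_cusp :: "complex \<Rightarrow> complex \<Rightarrow> form" where
  "nf_cusp a b = (\<lambda>x u. (x$1)^2 * (x$3) + (x$1) * (x$2)^2 * a + (x$2)^3 * b)"

lemma poly_form_nf_cusp: "poly_form (nf_cusp a b)" unfolding nf_cusp_def by auto

lemma nf_cusp_hessian:
  "hessian_form (nf_cusp a b) = (\<lambda>x u. - (4 * (x$1)^3 * a) - 12 * (x$1)^2 * (x$2) * b)"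
  unfolding hessian_form_def fun_eq_iff transvectant_2_eq transvectant_Suc_expand
  by (intro allI) (simp add: nf_cusp_def; (simp add: field_simps)?; algebra?)

lemma nf_cusp_Pi_axis3:
  "Pi_form (nf_cusp a b) x (axis 3 1) = - (2 * (x$1)^3 * (x$2) * a^2) + 2 * (x$1)^3 * (x$3) * b - 6 * (x$1)^2 * (x$2)^2 * a * b
      - 6 * (x$1) * (x$2)^3 * b^2"
  unfolding Pi_form_expand[OF poly_form_nf_cusp] nf_cusp_hessian
  by (simp add: nf_cusp_def axis_nth_if; (simp add: field_simps)?; algebra?)

lemma nf_cusp_Gamma_axis3:
  "Gamma_form (nf_cusp a b) x (axis 3 1) = (x$1) * a^3 + (x$2) * a^2 * b + (x$3) * b^2"
  unfolding Gamma_form_at_axis_3[OF poly_form_nf_cusp]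
    pdx3_Pi_form_cong[OF nf_cusp_Pi_axis3]
  by (simp add: nf_cusp_def; (simp add: field_simps)?; algebra?)

definition Gamma_certifies_reducible :: "form \<Rightarrow> bool" where
  "Gamma_certifies_reducible F \<longleftrightarrow>
     ((\<forall>x u. Gamma_form F x u = 0) \<longrightarrow> completely_reducible F)"

lemma Gamma_certifies_reducible_linear_subst:
  fixes A :: "complex^3^3"
  assumes F: "poly_form F" and u_free: "\<And>x u v. F x u = F x v" and "det A \<noteq> 0"
    and subst: "Gamma_certifies_reducible (\<lambda>x u. F (A *v x) u)"
  shows "Gamma_certifies_reducible F"
  unfolding Gamma_certifies_reducible_def
proof
  assume Gamma: "\<forall>x u. Gamma_form F x u = 0"
  obtain B where AB: "A ** B = mat 1" and BA: "B ** A = mat 1"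
    using \<open>det A \<noteq> 0\<close> unfolding invertible_det_nz[symmetric] invertible_def by blast
  have u_subst: "(\<lambda>x u. F (A *v x) u) = (\<lambda>x u. F (A *v x) (transpose B *v u))"
    using u_free by (simp add: fun_eq_iff)
  have "\<forall>x u. Gamma_form (\<lambda>x u. F (A *v x) u) x u = 0"
    unfolding u_subst Gamma_form_linear_subst[OF F BA] using Gamma by simp
  then obtain a b d
    where abd: "\<And>x u. F (A *v x) u = lin_form a x u * lin_form b x u * lin_form d x u"
    using subst unfolding Gamma_certifies_reducible_def completely_reducible_def by blast
  have lin_subst: "lin_form a (B *v y) u = lin_form (transpose B *v a) y u" for a y u
    unfolding lin_form_expand
    by (simp add: matrix_vector_mult_def transpose_def sum_3 algebra_simps)
  have "F y u = F (A *v (B *v y)) u" for y u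
    by (simp add: matrix_vector_mul_assoc AB)
  then have "F y u = lin_form (transpose B *v a) y u * lin_form (transpose B *v b) y u
      * lin_form (transpose B *v d) y u" for y u
    by (simp add: abd lin_subst)
  then show "completely_reducible F" unfolding completely_reducible_def by blast
qed

lemma completely_reducible_if_factors:
  assumes "\<And>x. F x 0 = (a1 * x$1 + a2 * x$2 + a3 * x$3) * (b1 * x$1 + b2 * x$2 + b3 * x$3)
      * (d1 * x$1 + d2 * x$2 + d3 * x$3)"
    and "\<And>x u v. F x u = F x v"
  shows "completely_reducible F"
  unfolding completely_reducible_def
proof (intro exI allI)
  fix x u
  show "F x u = lin_form (vector [a1, a2, a3]) x u * lin_form (vector [b1, b2, b3]) x u
      * lin_form (vector [d1, d2, d3]) x u"
    using assms by (metis lin_form_expand vector_3)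
qed

lemma cubic_has_root:
  assumes "a \<noteq> 0"
  shows "\<exists>t::complex. a * t^3 + b * t^2 + c * t + d = 0"
proof -
  have "degree [:d, c, b, a:] = 3" using assms by simp
  then have "\<not> constant (poly [:d, c, b, a:])" by (simp add: constant_degree)
  then obtain z where "poly [:d, c, b, a:] z = 0" using fundamental_theorem_of_algebra by blast
  then show ?thesis by (auto simp: algebra_simps power2_eq_square power3_eq_cube)
qed

lemma binary_quadratic_factors:
  fixes a b c :: complex
  shows "\<exists>p1 p2 p3 p4. \<forall>X Y. a * X^2 + b * X * Y + c * Y^2 = (p1 * X + p2 * Y) * (p3 * X
      + p4 * Y)"
proof (cases "a = 0")
  case True
  then have "a * X^2 + b * X * Y + c * Y^2 = (0 * X + 1 * Y) * (b * X + c * Y)" for X Y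
    by (simp add: algebra_simps power2_eq_square)
  then show ?thesis by blast
next
  case False
  define s where "s = csqrt (b^2 - 4*a*c)"
  define r1 where "r1 = (-b + s) / (2*a)"
  define r2 where "r2 = (-b - s) / (2*a)"
  have sum: "a * (r1 + r2) = - b" using False by (simp add: r1_def r2_def field_simps)
  have prod: "a * (r1 * r2) = c"
  proof -
    have "a * (r1 * r2) = (b^2 - s^2) / (4 * a)" using False
      by (simp add: r1_def r2_def field_simps power2_eq_square)
    also have "\<dots> = c" using False by (simp add: s_def field_simps)
    finally show ?thesis .
  qed
  have "a * X^2 + b * X * Y + c * Y^2 = (a * X + (- a * r1) * Y) * (1 * X + (- r2) * Y)" for X Y
  proof -
    have "(a * X + (- a * r1) * Y) * (1 * X + (- r2) * Y)
        = a * X^2 - (a * (r1 + r2)) * X * Y + a * (r1 * r2) * Y^2"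
      by (simp add: algebra_simps power2_eq_square)
    then show ?thesis by (simp add: sum prod)
  qed
  then show ?thesis by blast
qed

lemma binary_cubic_factors:
  fixes c0 c1 c2 c3 :: complex
  shows "\<exists>p1 p2 p3 p4 p5 p6. \<forall>X Y. c0 * X^3 + c1 * X^2 * Y + c2 * X * Y^2 + c3 * Y^3 =
      (p1 * X + p2 * Y) * (p3 * X + p4 * Y) * (p5 * X + p6 * Y)"
proof (cases "c0 = 0")
  case True
  obtain p1 p2 p3 p4 where p: "\<And>X Y. c1 * X^2 + c2 * X * Y + c3 * Y^2 = (p1 * X + p2 * Y) * (p3 * X
      + p4 * Y)"
    using binary_quadratic_factors by blast
  have "c0 * X^3 + c1 * X^2 * Y + c2 * X * Y^2 + c3 * Y^3
      = (0 * X + 1 * Y) * (p1 * X + p2 * Y) * (p3 * X + p4 * Y)" for X Y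
  proof -
    have "c0 * X^3 + c1 * X^2 * Y + c2 * X * Y^2 + c3 * Y^3 = Y * (c1 * X^2 + c2 * X * Y + c3 * Y^2)"
      using True by (simp add: algebra_simps power2_eq_square power3_eq_cube)
    also have "\<dots> = Y * ((p1 * X + p2 * Y) * (p3 * X + p4 * Y))" by (simp only: p)
    finally show ?thesis by (simp add: mult.assoc)
  qed
  then show ?thesis by blast
next
  case False
  obtain t where "c0 * t^3 + c1 * t^2 + c2 * t + c3 = 0" using cubic_has_root[OF False] by blast
  then have c3: "c3 = - (c0 * t^3 + c1 * t^2 + c2 * t)" by algebra
  define e1 where "e1 = c1 + c0 * t"
  define e2 where "e2 = c2 + t * e1"
  obtain p1 p2 p3 p4 where p: "\<And>X Y. c0 * X^2 + e1 * X * Y + e2 * Y^2 = (p1 * X + p2 * Y) * (p3 * X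
      + p4 * Y)"
    using binary_quadratic_factors by blast
  have "c0 * X^3 + c1 * X^2 * Y + c2 * X * Y^2 + c3 * Y^3
      = (1 * X + (- t) * Y) * (p1 * X + p2 * Y) * (p3 * X + p4 * Y)" for X Y
  proof -
    have "c0 * X^3 + c1 * X^2 * Y + c2 * X * Y^2 + c3 * Y^3
        = (1 * X + (- t) * Y) * (c0 * X^2 + e1 * X * Y + e2 * Y^2)"
      unfolding c3 e1_def e2_def by (simp add: algebra_simps power2_eq_square power3_eq_cube)
    also have "\<dots> = (1 * X + (- t) * Y) * ((p1 * X + p2 * Y) * (p3 * X + p4 * Y))" by (simp only: p)
    finally show ?thesis by (simp add: mult.assoc)
  qed
  then show ?thesis by blast
qed

text \<open>Cubics with no \<open>x\<^sub>3\<^sup>3\<close> term, i.e. vanishing at \<open>e\<^sub>3 = (0,0,1)\<close>, written as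
  \<open>x\<^sub>3\<^sup>2 L + x\<^sub>3 Q + C\<close> with binary forms \<open>L, Q, C\<close> in \<open>x\<^sub>1, x\<^sub>2\<close>.\<close>

definition cubic_through_e3 :: "complex \<Rightarrow> complex \<Rightarrow> complex \<Rightarrow> complex \<Rightarrow> complex \<Rightarrow>
    complex \<Rightarrow> complex \<Rightarrow> complex \<Rightarrow> complex \<Rightarrow> form" where
  "cubic_through_e3 l1 l2 q1 q2 q3 c0 c1 c2 c3 = (\<lambda>x u.
     (x$3)^2 * (l1 * x$1 + l2 * x$2) + x$3 * (q1 * (x$1)^2 + q2 * x$1 * x$2 + q3 * (x$2)^2)
     + c0 * (x$1)^3 + c1 * (x$1)^2 * x$2 + c2 * x$1 * (x$2)^2 + c3 * (x$2)^3)"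

definition e3_stabilizer :: "complex \<Rightarrow> complex \<Rightarrow> complex \<Rightarrow> complex \<Rightarrow> complex \<Rightarrow> complex \<Rightarrow>
    complex \<Rightarrow> complex^3^3" where
  "e3_stabilizer ma mb mc md al be s =
     vector [vector [ma, mb, 0], vector [mc, md, 0], vector [al, be, s]]"

lemma e3_stabilizer_mult:
  "e3_stabilizer ma mb mc md al be s *v x =
     vector [ma * x$1 + mb * x$2, mc * x$1 + md * x$2, al * x$1 + be * x$2 + s * x$3]"
  by (simp add: e3_stabilizer_def vec_eq_iff forall_3 matrix_vector_mult_def sum_3 vector_3)

lemma det_e3_stabilizer: "det (e3_stabilizer ma mb mc md al be s) = s * (ma * md - mb * mc)"
  by (simp add: e3_stabilizer_def det_3 vector_3 algebra_simps)

lemma cubic_through_e3_subst: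
  "(\<lambda>x u. cubic_through_e3 l1 l2 q1 q2 q3 c0 c1 c2 c3 (e3_stabilizer ma mb mc md al be s *v x) u) =
    cubic_through_e3
      (l1 * ma * s^2 + l2 * mc * s^2)
      (l1 * mb * s^2 + l2 * md * s^2)
      (2 * l1 * ma * al * s + 2 * l2 * mc * al * s + q1 * ma^2 * s + q2 * ma * mc * s + q3 * mc^2 * s)
      (2 * l1 * ma * be * s + 2 * l1 * mb * al * s + 2 * l2 * mc * be * s + 2 * l2 * md * al * s + 2 * q1 * ma * mb * s
       + q2 * ma * md * s + q2 * mb * mc * s + 2 * q3 * mc * md * s)
      (2 * l1 * mb * be * s + 2 * l2 * md * be * s + q1 * mb^2 * s + q2 * mb * md * s + q3 * md^2 * s)
      (l1 * ma * al^2 + l2 * mc * al^2 + q1 * ma^2 * al + q2 * ma * mc * al + q3 * mc^2 * al + c0 * ma^3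
       + c1 * ma^2 * mc + c2 * ma * mc^2 + c3 * mc^3)
      (2 * l1 * ma * al * be + l1 * mb * al^2 + 2 * l2 * mc * al * be + l2 * md * al^2 + q1 * ma^2 * be
       + 2 * q1 * ma * mb * al + q2 * ma * mc * be + q2 * ma * md * al + q2 * mb * mc * al + q3 * mc^2 * be
       + 2 * q3 * mc * md * al + 3 * c0 * ma^2 * mb + c1 * ma^2 * md + 2 * c1 * ma * mb * mc + 2 * c2 * ma * mc * md
       + c2 * mb * mc^2 + 3 * c3 * mc^2 * md)
      (l1 * ma * be^2 + 2 * l1 * mb * al * be + l2 * mc * be^2 + 2 * l2 * md * al * be + 2 * q1 * ma * mb * be
       + q1 * mb^2 * al + q2 * ma * md * be + q2 * mb * mc * be + q2 * mb * md * al + 2 * q3 * mc * md * be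
       + q3 * md^2 * al + 3 * c0 * ma * mb^2 + 2 * c1 * ma * mb * md + c1 * mb^2 * mc + c2 * ma * md^2
       + 2 * c2 * mb * mc * md + 3 * c3 * mc * md^2)
      (l1 * mb * be^2 + l2 * md * be^2 + q1 * mb^2 * be + q2 * mb * md * be + q3 * md^2 * be + c0 * mb^3
       + c1 * mb^2 * md + c2 * mb * md^2 + c3 * md^3)"
  unfolding cubic_through_e3_def e3_stabilizer_mult fun_eq_iff
  by (simp add: vector_3; algebra)

lemma Gamma_certifies_cubic_through_e3_subst:
  assumes "s * (ma * md - mb * mc) \<noteq> 0"
    and "Gamma_certifies_reducible
      (\<lambda>x u. cubic_through_e3 l1 l2 q1 q2 q3 c0 c1 c2 c3 (e3_stabilizer ma mb mc md al be s *v x) u)"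
  shows "Gamma_certifies_reducible (cubic_through_e3 l1 l2 q1 q2 q3 c0 c1 c2 c3)"
proof (rule Gamma_certifies_reducible_linear_subst[OF _ _ _ assms(2)])
  show "poly_form (cubic_through_e3 l1 l2 q1 q2 q3 c0 c1 c2 c3)"
    unfolding cubic_through_e3_def by auto
  show "cubic_through_e3 l1 l2 q1 q2 q3 c0 c1 c2 c3 x u = cubic_through_e3 l1 l2 q1 q2 q3 c0 c1 c2 c3 x v"
    for x u v by (simp add: cubic_through_e3_def)
  show "det (e3_stabilizer ma mb mc md al be s) \<noteq> 0"
    using assms(1) by (simp add: det_e3_stabilizer)
qed

lemma cone_completely_reducible:
  "completely_reducible (cubic_through_e3 0 0 0 0 0 c0 c1 c2 c3)"
proof -
  obtain p1 p2 p3 p4 p5 p6 where p: "\<And>X Y. c0 * X^3 + c1 * X^2 * Y + c2 * X * Y^2 + c3 * Y^3 =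
      (p1 * X + p2 * Y) * (p3 * X + p4 * Y) * (p5 * X + p6 * Y)"
    using binary_cubic_factors by blast
  show ?thesis
  proof (rule completely_reducible_if_factors)
    show "cubic_through_e3 0 0 0 0 0 c0 c1 c2 c3 x 0 = (p1 * x$1 + p2 * x$2 + 0 * x$3)
        * (p3 * x$1 + p4 * x$2 + 0 * x$3) * (p5 * x$1 + p6 * x$2 + 0 * x$3)" for x
      using p[of "x$1" "x$2"] by (simp add: cubic_through_e3_def mult.assoc)
  qed (simp add: cubic_through_e3_def)
qed

lemma Gamma_certifies_nf_smooth:
  assumes "l1 = 1" "l2 = 0" "q1 = 0" "q2 = 0"
  shows "Gamma_certifies_reducible (cubic_through_e3 l1 l2 q1 q2 q3 c0 c1 c2 c3)"
  unfolding Gamma_certifies_reducible_def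
proof
  have e: "cubic_through_e3 l1 l2 q1 q2 q3 c0 c1 c2 c3 = nf_smooth q3 c0 c1 c2 c3"
    using assms by (simp add: cubic_through_e3_def nf_smooth_def fun_eq_iff algebra_simps)
  assume "\<forall>x u. Gamma_form (cubic_through_e3 l1 l2 q1 q2 q3 c0 c1 c2 c3) x u = 0"
  then have G: "Gamma_form (nf_smooth q3 c0 c1 c2 c3) x u = 0" for x u
    unfolding e by blast
  from G[of "axis 3 1" "axis 1 1"] have "q3^3 = 0" by (simp add: nf_smooth_Gamma_axis1 axis_nth_if)
  then have q3: "q3 = 0" by simp
  from G[of "axis 1 1" "axis 1 1"] q3 have c3: "c3 = 0" by (simp add: nf_smooth_Gamma_axis1 axis_nth_if)
  from G[of "axis 1 1" "axis 2 1"] have disc: "c1^2 - 4 * c0 * c2 = 0"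
    by (simp add: nf_smooth_Gamma_axis2 axis_nth_if algebra_simps)
  define r0 where "r0 = csqrt c0"
  have r0: "r0^2 = c0" by (simp add: r0_def)
  have "(2 * r0 * csqrt c2)^2 = c1^2" using disc
    by (simp add: r0_def power_mult_distrib)
  then have "2 * r0 * csqrt c2 = c1 \<or> 2 * r0 * csqrt c2 = - c1"
    by (simp add: power2_eq_iff)
  then obtain r2 where r2: "r2^2 = c2" "2 * r0 * r2 = c1"
    by (metis mult_minus_right power2_csqrt power2_minus minus_minus)
  have i2: "\<i>^2 = (-1::complex)" by simp
  \<comment> \<open>\<open>f = x\<^sub>1 (x\<^sub>3\<^sup>2 + (r0 x\<^sub>1 + r2 x\<^sub>2)\<^sup>2)\<close>, and the sum of two squares splits over \<open>\<complex>\<close>\<close>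
  show "completely_reducible (cubic_through_e3 l1 l2 q1 q2 q3 c0 c1 c2 c3)"
    unfolding e
  proof (rule completely_reducible_if_factors)
    show "nf_smooth q3 c0 c1 c2 c3 x 0 = (1 * x$1 + 0 * x$2 + 0 * x$3)
      * ((\<i> * r0) * x$1 + (\<i> * r2) * x$2 + 1 * x$3)
      * ((-\<i> * r0) * x$1 + (-\<i> * r2) * x$2 + 1 * x$3)" for x
      unfolding nf_smooth_def q3 c3 r0[symmetric] r2(1)[symmetric] r2(2)[symmetric]
      using i2 by algebra
  qed (simp add: nf_smooth_def)
qed

lemma Gamma_certifies_smooth_tangent_x:
  assumes "l1 = 1" "l2 = 0"
  shows "Gamma_certifies_reducible (cubic_through_e3 l1 l2 q1 q2 q3 c0 c1 c2 c3)"
proof (rule Gamma_certifies_cubic_through_e3_subst)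
  show "Gamma_certifies_reducible (\<lambda>x u. cubic_through_e3 l1 l2 q1 q2 q3 c0 c1 c2 c3
      (e3_stabilizer 1 0 0 1 (- q1 / 2) (- q2 / 2) 1 *v x) u)"
    unfolding cubic_through_e3_subst by (rule Gamma_certifies_nf_smooth) (simp_all add: assms)
qed simp

lemma Gamma_certifies_smooth_l1:
  assumes "l1 \<noteq> 0"
  shows "Gamma_certifies_reducible (cubic_through_e3 l1 l2 q1 q2 q3 c0 c1 c2 c3)"
proof (rule Gamma_certifies_cubic_through_e3_subst)
  show "Gamma_certifies_reducible (\<lambda>x u. cubic_through_e3 l1 l2 q1 q2 q3 c0 c1 c2 c3
      (e3_stabilizer (1 / l1) (- l2 / l1) 0 1 0 0 1 *v x) u)"
    unfolding cubic_through_e3_subst by (rule Gamma_certifies_smooth_tangent_x) (simp_all add: assms)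
qed (simp add: assms)

lemma Gamma_certifies_smooth:
  assumes "l1 \<noteq> 0 \<or> l2 \<noteq> 0"
  shows "Gamma_certifies_reducible (cubic_through_e3 l1 l2 q1 q2 q3 c0 c1 c2 c3)"
proof (cases "l1 = 0")
  case True
  show ?thesis
  proof (rule Gamma_certifies_cubic_through_e3_subst)
    show "Gamma_certifies_reducible (\<lambda>x u. cubic_through_e3 l1 l2 q1 q2 q3 c0 c1 c2 c3
        (e3_stabilizer 0 1 1 0 0 0 1 *v x) u)"
      unfolding cubic_through_e3_subst by (rule Gamma_certifies_smooth_l1) (use assms True in simp)
  qed simp
qed (rule Gamma_certifies_smooth_l1)

lemma Gamma_certifies_nf_node:
  assumes "l1 = 0" "l2 = 0" "q1 = 0" "q2 = 1" "q3 = 0" "c1 = 1" "c2 = 1"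
  shows "Gamma_certifies_reducible (cubic_through_e3 l1 l2 q1 q2 q3 c0 c1 c2 c3)"
  unfolding Gamma_certifies_reducible_def
proof
  have e: "cubic_through_e3 l1 l2 q1 q2 q3 c0 c1 c2 c3 = nf_node c0 c3"
    using assms by (simp add: cubic_through_e3_def nf_node_def fun_eq_iff algebra_simps)
  assume "\<forall>x u. Gamma_form (cubic_through_e3 l1 l2 q1 q2 q3 c0 c1 c2 c3) x u = 0"
  then have G: "Gamma_form (nf_node c0 c3) x u = 0" for x u
    unfolding e by blast
  from G[of "axis 3 1" "axis 3 1"] have "c0 * c3 = 0"
    by (simp add: nf_node_Gamma_axis3 axis_nth_if)
  moreover from G[of "axis 1 1" "axis 3 1"] have "c0 - 3 * (c0 * c3) = 0"
    by (simp add: nf_node_Gamma_axis3 axis_nth_if algebra_simps)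
  moreover from G[of "axis 2 1" "axis 3 1"] have "c3 - 3 * (c0 * c3) = 0"
    by (simp add: nf_node_Gamma_axis3 axis_nth_if algebra_simps)
  ultimately have c0: "c0 = 0" and c3: "c3 = 0"
    by algebra+
  show "completely_reducible (cubic_through_e3 l1 l2 q1 q2 q3 c0 c1 c2 c3)"
    unfolding e
  proof (rule completely_reducible_if_factors)
    show "nf_node c0 c3 x 0 = (1 * x$1 + 0 * x$2 + 0 * x$3) * (0 * x$1 + 1 * x$2 + 0 * x$3)
      * (1 * x$1 + 1 * x$2 + 1 * x$3)" for x
      unfolding nf_node_def c0 c3 by algebra
  qed (simp add: nf_node_def)
qed

lemma Gamma_certifies_nf_cusp:
  assumes "l1 = 0" "l2 = 0" "q1 = 1" "q2 = 0" "q3 = 0" "c0 = 0" "c1 = 0"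
  shows "Gamma_certifies_reducible (cubic_through_e3 l1 l2 q1 q2 q3 c0 c1 c2 c3)"
  unfolding Gamma_certifies_reducible_def
proof
  have e: "cubic_through_e3 l1 l2 q1 q2 q3 c0 c1 c2 c3 = nf_cusp c2 c3"
    using assms by (simp add: cubic_through_e3_def nf_cusp_def fun_eq_iff algebra_simps)
  assume "\<forall>x u. Gamma_form (cubic_through_e3 l1 l2 q1 q2 q3 c0 c1 c2 c3) x u = 0"
  then have G: "Gamma_form (nf_cusp c2 c3) x u = 0" for x u
    unfolding e by blast
  from G[of "axis 1 1" "axis 3 1"] have c2: "c2 = 0" by (simp add: nf_cusp_Gamma_axis3 axis_nth_if)
  from G[of "axis 3 1" "axis 3 1"] have c3: "c3 = 0" by (simp add: nf_cusp_Gamma_axis3 axis_nth_if)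
  show "completely_reducible (cubic_through_e3 l1 l2 q1 q2 q3 c0 c1 c2 c3)"
    unfolding e
  proof (rule completely_reducible_if_factors)
    show "nf_cusp c2 c3 x 0 = (1 * x$1 + 0 * x$2 + 0 * x$3) * (1 * x$1 + 0 * x$2 + 0 * x$3)
      * (0 * x$1 + 0 * x$2 + 1 * x$3)" for x
      unfolding nf_cusp_def c2 c3 by algebra
  qed (simp add: nf_cusp_def)
qed

lemma Gamma_certifies_node:
  assumes "l1 = 0" "l2 = 0" "q1 = 0" "q3 = 0" "q2 \<noteq> 0"
  shows "Gamma_certifies_reducible (cubic_through_e3 l1 l2 q1 q2 q3 c0 c1 c2 c3)"
proof (rule Gamma_certifies_cubic_through_e3_subst)
  show "Gamma_certifies_reducible (\<lambda>x u. cubic_through_e3 l1 l2 q1 q2 q3 c0 c1 c2 c3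
      (e3_stabilizer 1 0 0 1 ((1 - c1) / q2) ((1 - c2) / q2) (1 / q2) *v x) u)"
    unfolding cubic_through_e3_subst by (rule Gamma_certifies_nf_node) (simp_all add: assms)
qed (simp add: assms)

lemma Gamma_certifies_cusp:
  assumes "l1 = 0" "l2 = 0" "q1 \<noteq> 0" "q2 = 0" "q3 = 0"
  shows "Gamma_certifies_reducible (cubic_through_e3 l1 l2 q1 q2 q3 c0 c1 c2 c3)"
proof (rule Gamma_certifies_cubic_through_e3_subst)
  show "Gamma_certifies_reducible (\<lambda>x u. cubic_through_e3 l1 l2 q1 q2 q3 c0 c1 c2 c3
      (e3_stabilizer 1 0 0 1 (- c0 / q1) (- c1 / q1) (1 / q1) *v x) u)"
    unfolding cubic_through_e3_subst by (rule Gamma_certifies_nf_cusp) (simp_all add: assms)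
qed (simp add: assms)

lemma Gamma_certifies_node_diagonal:
  assumes "l1 = 0" "l2 = 0" "q1 \<noteq> 0" "q2 = 0" "q3 \<noteq> 0"
  shows "Gamma_certifies_reducible (cubic_through_e3 l1 l2 q1 q2 q3 c0 c1 c2 c3)"
proof -
  define r where "r = csqrt q1"
  define t where "t = csqrt (- q3)"
  have q1: "q1 = r^2" and q3: "q3 = - (t^2)"
    by (simp_all add: r_def t_def)
  have "r \<noteq> 0" "t \<noteq> 0"
    using assms(3,5) q1 q3 by auto
  \<comment> \<open>maps \<open>Q = (r x\<^sub>1 + t x\<^sub>2) (r x\<^sub>1 - t x\<^sub>2)\<close> to \<open>x\<^sub>1 x\<^sub>2\<close>\<close>
  show ?thesis
  proof (rule Gamma_certifies_cubic_through_e3_subst)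
    show "Gamma_certifies_reducible (\<lambda>x u. cubic_through_e3 l1 l2 q1 q2 q3 c0 c1 c2 c3
        (e3_stabilizer (1 / (2 * r)) (1 / (2 * r)) (1 / (2 * t)) (- 1 / (2 * t)) 0 0 1 *v x) u)"
      unfolding cubic_through_e3_subst
      by (rule Gamma_certifies_node)
        (use assms(1,2,4) \<open>r \<noteq> 0\<close> \<open>t \<noteq> 0\<close> in \<open>simp_all add: q1 q3 field_simps power2_eq_square\<close>)
  qed (use \<open>r \<noteq> 0\<close> \<open>t \<noteq> 0\<close> in \<open>simp add: field_simps\<close>)
qed

lemma Gamma_certifies_singular_q1:
  assumes "l1 = 0" "l2 = 0" "q1 \<noteq> 0"
  shows "Gamma_certifies_reducible (cubic_through_e3 l1 l2 q1 q2 q3 c0 c1 c2 c3)"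
proof (rule Gamma_certifies_cubic_through_e3_subst)
  have diagonal: "Gamma_certifies_reducible (cubic_through_e3 l1' l2' q1' q2' q3' c0' c1' c2' c3')"
    if "l1' = 0" "l2' = 0" "q1' \<noteq> 0" "q2' = 0" for l1' l2' q1' q2' q3' c0' c1' c2' c3'
    using Gamma_certifies_cusp[OF that] Gamma_certifies_node_diagonal[OF that] by blast
  show "Gamma_certifies_reducible (\<lambda>x u. cubic_through_e3 l1 l2 q1 q2 q3 c0 c1 c2 c3
      (e3_stabilizer 1 (- q2 / (2 * q1)) 0 1 0 0 1 *v x) u)"
    unfolding cubic_through_e3_subst by (rule diagonal) (simp_all add: assms field_simps)
qed simp

lemma Gamma_certifies_singular:
  assumes "l1 = 0" "l2 = 0"
  shows "Gamma_certifies_reducible (cubic_through_e3 l1 l2 q1 q2 q3 c0 c1 c2 c3)"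
proof -
  consider "q1 \<noteq> 0" | "q1 = 0" "q3 \<noteq> 0" | "q1 = 0" "q3 = 0" "q2 \<noteq> 0" | "q1 = 0" "q2 = 0" "q3 = 0"
    by blast
  then show ?thesis
  proof cases
    case 1
    then show ?thesis using Gamma_certifies_singular_q1 assms by blast
  next
    case 2
    show ?thesis
    proof (rule Gamma_certifies_cubic_through_e3_subst)
      show "Gamma_certifies_reducible (\<lambda>x u. cubic_through_e3 l1 l2 q1 q2 q3 c0 c1 c2 c3
          (e3_stabilizer 0 1 1 0 0 0 1 *v x) u)"
        unfolding cubic_through_e3_subst by (rule Gamma_certifies_singular_q1) (use assms 2 in simp_all)
    qed simp
  next
    case 3
    then show ?thesis using Gamma_certifies_node assms by blast
  next
    case 4
    then show ?thesis
      using cone_completely_reducible assms unfolding Gamma_certifies_reducible_def by simp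
  qed
qed

lemma Gamma_certifies_cubic_through_e3:
  "Gamma_certifies_reducible (cubic_through_e3 l1 l2 q1 q2 q3 c0 c1 c2 c3)"
  using Gamma_certifies_smooth[of l1 l2] Gamma_certifies_singular[of l1 l2] by blast

lemma cubic_exponents:
  "{(i, j, k). i + j + k = (3::nat)} = {(0,0,3), (0,1,2), (0,2,1), (0,3,0), (1,0,2), (1,1,1),
     (1,2,0), (2,0,1), (2,1,0), (3,0,0)}"
proof (rule set_eqI, clarify)
  fix i j k :: nat
  show "((i, j, k) \<in> {(i, j, k). i + j + k = 3}) = ((i, j, k) \<in> {(0,0,3), (0,1,2), (0,2,1), (0,3,0),
      (1,0,2), (1,1,1), (1,2,0), (2,0,1), (2,1,0), (3,0,0)})"
  proof
    assume "(i, j, k) \<in> {(i, j, k). i + j + k = 3}"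
    then have h: "i + j + k = 3" by simp
    have "i = 0 \<or> i = 1 \<or> i = 2 \<or> i = 3" "j = 0 \<or> j = 1 \<or> j = 2 \<or> j = 3"
      using h by arith+
    then show "(i, j, k) \<in> {(0,0,3), (0,1,2), (0,2,1), (0,3,0), (1,0,2), (1,1,1), (1,2,0), (2,0,1),
        (2,1,0), (3,0,0)}"
      using h by (elim disjE) simp_all
  qed auto
qed

lemma cubic_form_expand:
  "cubic_form c x u = c 3 0 0 * (x$1)^3 + c 2 1 0 * (x$1)^2 * x$2 + c 2 0 1 * (x$1)^2 * x$3
     + c 1 2 0 * x$1 * (x$2)^2 + c 1 1 1 * x$1 * x$2 * x$3 + c 1 0 2 * x$1 * (x$3)^2
     + c 0 3 0 * (x$2)^3 + c 0 2 1 * (x$2)^2 * x$3 + c 0 1 2 * x$2 * (x$3)^2 + c 0 0 3 * (x$3)^3"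
  unfolding cubic_form_def cubic_exponents by (simp add: algebra_simps)

lemma poly_form_cubic_form [simp, intro]: "poly_form (cubic_form c)"
proof -
  have "cubic_form c = (\<lambda>x u. c 3 0 0 * (x$1)^3 + c 2 1 0 * (x$1)^2 * x$2 + c 2 0 1 * (x$1)^2 * x$3
     + c 1 2 0 * x$1 * (x$2)^2 + c 1 1 1 * x$1 * x$2 * x$3 + c 1 0 2 * x$1 * (x$3)^2
     + c 0 3 0 * (x$2)^3 + c 0 2 1 * (x$2)^2 * x$3 + c 0 1 2 * x$2 * (x$3)^2 + c 0 0 3 * (x$3)^3)"
    by (simp add: fun_eq_iff cubic_form_expand)
  then show ?thesis by simp
qed

lemma Gamma_certifies_cubic_form_by_subst:
  fixes A :: "complex^3^3"
  assumes "det A \<noteq> 0"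
    and "(\<lambda>x u. cubic_form c (A *v x) u) = cubic_through_e3 l1 l2 q1 q2 q3 c0 c1 c2 c3"
  shows "Gamma_certifies_reducible (cubic_form c)"
proof (rule Gamma_certifies_reducible_linear_subst[OF poly_form_cubic_form _ assms(1)])
  show "cubic_form c x u = cubic_form c x v" for x u v
    by (simp add: cubic_form_expand)
  show "Gamma_certifies_reducible (\<lambda>x u. cubic_form c (A *v x) u)"
    unfolding assms(2) by (rule Gamma_certifies_cubic_through_e3)
qed

lemma Gamma_certifies_cubic_form: "Gamma_certifies_reducible (cubic_form c)"
proof (cases "c 3 0 0 = 0")
  case True
  let ?A = "vector [vector [0, 0, 1], vector [0, 1, 0], vector [1, 0, 0]] :: complex^3^3"
  have e: "(\<lambda>x u. cubic_form c (?A *v x) u) = cubic_through_e3 (c 2 0 1) (c 2 1 0) (c 1 0 2) (c 1 1 1)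
      (c 1 2 0) (c 0 0 3) (c 0 1 2) (c 0 2 1) (c 0 3 0)"
    unfolding fun_eq_iff cubic_form_expand cubic_through_e3_def
    using True by (simp add: matrix_vector_mult_def sum_3 vector_3 algebra_simps)
  show ?thesis
    by (rule Gamma_certifies_cubic_form_by_subst[OF _ e]) (simp add: det_3 vector_3)
next
  case False
  obtain t where "c 3 0 0 * t^3 + c 2 0 1 * t^2 + c 1 0 2 * t + c 0 0 3 = 0"
    using cubic_has_root[OF False] by blast
  then have c003: "c 0 0 3 = - (c 3 0 0 * t^3 + c 2 0 1 * t^2 + c 1 0 2 * t)"
    by algebra
  \<comment> \<open>the point \<open>(t, 0, 1)\<close> lies on the curve, and \<open>x\<^sub>1 \<mapsto> x\<^sub>1 + t x\<^sub>3\<close> moves it to \<open>e\<^sub>3\<close>\<close>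
  let ?A = "vector [vector [1, 0, t], vector [0, 1, 0], vector [0, 0, 1]] :: complex^3^3"
  have e: "(\<lambda>x u. cubic_form c (?A *v x) u) = cubic_through_e3
      (c 1 0 2 + 2 * c 2 0 1 * t + 3 * c 3 0 0 * t^2) (c 0 1 2 + c 1 1 1 * t + c 2 1 0 * t^2)
      (c 2 0 1 + 3 * c 3 0 0 * t) (c 1 1 1 + 2 * c 2 1 0 * t) (c 0 2 1 + c 1 2 0 * t)
      (c 3 0 0) (c 2 1 0) (c 1 2 0) (c 0 3 0)"
    unfolding fun_eq_iff cubic_form_expand cubic_through_e3_def c003
    by (simp add: matrix_vector_mult_def sum_3 vector_3; algebra)
  show ?thesis
    by (rule Gamma_certifies_cubic_form_by_subst[OF _ e]) (simp add: det_3 vector_3)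
qed

lemma hessian_form_product_of_linear_forms:
  "hessian_form (\<lambda>x u. (a1*x$1+a2*x$2+a3*x$3)*(b1*x$1+b2*x$2+b3*x$3)*(d1*x$1+d2*x$2+d3*x$3)) x u =
   (a1*(b2*d3 - b3*d2) - a2*(b1*d3 - b3*d1) + a3*(b1*d2 - b2*d1))^2 *
   ((a1*x$1+a2*x$2+a3*x$3)*(b1*x$1+b2*x$2+b3*x$3)*(d1*x$1+d2*x$2+d3*x$3))"
  unfolding hessian_form_def transvectant_2_eq transvectant_Suc_expand
  by (simp; algebra)

lemma hessian_multiple_if_completely_reducible:
  assumes "completely_reducible F"
  shows "\<exists>lam. \<forall>x u. hessian_form F x u = lam * F x u"
proof -
  obtain a b d where "\<And>x u. F x u = lin_form a x u * lin_form b x u * lin_form d x u"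
    using assms unfolding completely_reducible_def by blast
  then have F: "F = (\<lambda>x u. (a$1*x$1+a$2*x$2+a$3*x$3)*(b$1*x$1+b$2*x$2+b$3*x$3)
      *(d$1*x$1+d$2*x$2+d$3*x$3))"
    by (simp add: fun_eq_iff lin_form_expand)
  show ?thesis
    unfolding F hessian_form_product_of_linear_forms by blast
qed

lemma Pi_form_vanishes_if_hessian_multiple:
  assumes F: "poly_form F" and "\<forall>x u. hessian_form F x u = lam * F x u"
  shows "Pi_form F x u = 0"
proof -
  have hessian: "hessian_form F = (\<lambda>x u. lam * F x u)"
    using assms(2) by (simp add: fun_eq_iff)
  have "Pi_form F x u = lam * transvectant 1 F F ux x u / 12"
    unfolding Pi_form_def hessian by (subst transvectant_scale_left) (auto simp: F)
  \<comment> \<open>a transvectant with two equal arguments is alternating, hence zero\<close>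
  also have "transvectant 1 F F ux x u = 0"
    unfolding One_nat_def transvectant_Suc_expand by (simp add: algebra_simps)
  finally show ?thesis by simp
qed

lemma Gamma_form_vanishes_if_Pi_vanishes:
  assumes "\<forall>x u. Pi_form F x u = 0"
  shows "Gamma_form F x u = 0"
proof -
  have "Pi_form F = (\<lambda>x u. 0)" using assms by (simp add: fun_eq_iff)
  then show ?thesis by (simp add: Gamma_form_def transvectant_zero_left)
qed

theorem theorem8p2:
  fixes c :: "nat \<Rightarrow> nat \<Rightarrow> nat \<Rightarrow> complex"
  defines "f \<equiv> cubic_form c"
  shows "((\<exists>a b d. \<forall>x u. f x u = lin_form a x u * lin_form b x u * lin_form d x u)
            \<longleftrightarrow> (\<exists>lam::complex. \<forall>x u. hessian_form f x u = lam * f x u))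
       \<and> ((\<exists>a b d. \<forall>x u. f x u = lin_form a x u * lin_form b x u * lin_form d x u)
            \<longleftrightarrow> (\<forall>x u. Pi_form f x u = 0))
       \<and> ((\<exists>a b d. \<forall>x u. f x u = lin_form a x u * lin_form b x u * lin_form d x u)
            \<longleftrightarrow> (\<forall>x u. Gamma_form f x u = 0))"
proof -
  have "completely_reducible f \<Longrightarrow> \<exists>lam. \<forall>x u. hessian_form f x u = lam * f x u"
    by (rule hessian_multiple_if_completely_reducible)
  moreover have "\<exists>lam. \<forall>x u. hessian_form f x u = lam * f x u \<Longrightarrow> \<forall>x u. Pi_form f x u = 0"
    using Pi_form_vanishes_if_hessian_multiple[of f] unfolding f_def by blast
  moreover have "\<forall>x u. Pi_form f x u = 0 \<Longrightarrow> \<forall>x u. Gamma_form f x u = 0"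
    by (blast intro: Gamma_form_vanishes_if_Pi_vanishes)
  moreover have "\<forall>x u. Gamma_form f x u = 0 \<Longrightarrow> completely_reducible f"
    using Gamma_certifies_cubic_form unfolding f_def Gamma_certifies_reducible_def by blast
  ultimately show ?thesis
    unfolding completely_reducible_def by blast
qed

end
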